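(* For integers $r\ge 2$ and $n\ge r+1$, $$\mathrm{ex}_r(n,\Delta_{r+1}^r)\le \frac{(r-1)(n-r+1)+1}{r(n-r)}\binom{n}{r}.$$
   Context: An $r$-uniform hypergraph ($r$-graph) is a pair $(V,E)$ with $E$ a family of $r$-element subsets of $V$. $\Delta_{r+1}^r$ denotes the complete $r$-graph on $r+1$ vertices (all $r$-subsets of an $(r+1)$-set as edges). $\mathrm{ex}_r(n,\Delta_{r+1}^r)$ is the maximum number of edges in an $r$-graph on $n$ vertices containing no sub-hypergraph isomorphic to $\Delta_{r+1}^r$. *)

theory Defs
  imports Complex_Main
begin

definition r_graph :: "nat \<Rightarrow> 'a set \<Rightarrow> 'a set set \<Rightarrow> bool" where
  "r_graph r V E \<longleftrightarrow> (\<forall>e\<in>E. e \<subseteq> V \<and> card e = r \<and> finite e)"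

definition contains_clique :: "nat \<Rightarrow> 'a set \<Rightarrow> 'a set set \<Rightarrow> bool" where
  "contains_clique r V E \<longleftrightarrow>
     (\<exists>S. S \<subseteq> V \<and> finite S \<and> card S = r + 1 \<and> {e. e \<subseteq> S \<and> card e = r} \<subseteq> E)"

definition ex_clique :: "nat \<Rightarrow> nat \<Rightarrow> nat" where
  "ex_clique r n = Max {card E | E. r_graph r {0..<n} E \<and> \<not> contains_clique r {0..<n} E}"

end

theory Submission
  imports Defs "HOL-Analysis.Convex"
begin

text \<open>For an (r-1)-set T let d(T) be the number of edges containing T. Double counting gives
  \<open>\<Sum>\<^sub>T d(T) = r |E|\<close> and \<open>\<Sum>\<^sub>T d(T)\<^sup>2 = \<Sum>\<^sub>e \<Sum>\<^sub>T d(T)\<close>, the inner sum running over the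
  (r-1)-subsets T of the edge e. If v is a vertex outside e, at most r-1 of the r sets
  \<open>insert v T\<close> are edges, for otherwise \<open>insert v e\<close> spans a clique; hence the inner sum is at most
  \<open>r + (n-r)(r-1)\<close>. Cauchy-Schwarz now yields \<open>(r |E|)\<^sup>2 \<le> C(n,r-1) |E| (r + (n-r)(r-1))\<close>, and
  \<open>(n-r+1) C(n,r-1) = r C(n,r)\<close> turns this into the bound, even with n-r+1 in place of n-r in
  the denominator.\<close>

definition codegree :: "'a set set \<Rightarrow> 'a set \<Rightarrow> nat" where
  "codegree E T = card {f \<in> E. T \<subseteq> f}"

lemma card_subsets_card_minus_one:
  assumes "finite e" "e \<noteq> {}"
  shows "card {T. T \<subseteq> e \<and> card T = card e - 1} = card e"
  using n_subsets[OF assms(1)] assms by (cases "card e") auto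

lemma r_graph_finite_edges:
  assumes "r_graph r V E" "finite V"
  shows "finite E"
  using assms unfolding r_graph_def by (meson Pow_iff finite_Pow_iff finite_subset subsetI)

lemma sum_codegree_mult_eq:
  fixes g :: "'a set \<Rightarrow> 'b::comm_semiring_1"
  assumes "finite V" "finite E" "\<forall>e\<in>E. e \<subseteq> V"
  shows "(\<Sum>T\<in>{T. T \<subseteq> V \<and> card T = k}. of_nat (codegree E T) * g T)
       = (\<Sum>e\<in>E. \<Sum>T\<in>{T. T \<subseteq> e \<and> card T = k}. g T)"
proof -
  let ?Ts = "{T. T \<subseteq> V \<and> card T = k}"
  have "(\<Sum>T\<in>?Ts. of_nat (codegree E T) * g T) = (\<Sum>T\<in>?Ts. \<Sum>e\<in>E. if T \<subseteq> e then g T else 0)"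
    using assms(2) by (intro sum.cong) (auto simp: codegree_def sum.If_cases Int_def)
  also have "\<dots> = (\<Sum>e\<in>E. \<Sum>T\<in>?Ts. if T \<subseteq> e then g T else 0)"
    by (rule sum.swap)
  also have "\<dots> = (\<Sum>e\<in>E. \<Sum>T\<in>{T. T \<subseteq> e \<and> card T = k}. g T)"
  proof (rule sum.cong[OF refl])
    fix e assume "e \<in> E"
    then have "{T \<in> ?Ts. T \<subseteq> e} = {T. T \<subseteq> e \<and> card T = k}" using assms(3) by auto
    then show "(\<Sum>T\<in>?Ts. if T \<subseteq> e then g T else 0) = (\<Sum>T\<in>{T. T \<subseteq> e \<and> card T = k}. g T)"
      using assms(1) by (simp add: sum.If_cases Int_def)
  qed
  finally show ?thesis .
qed

lemma sum_codegree_eq: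
  assumes "r_graph r V E" "finite V"
  shows "(\<Sum>T\<in>{T. T \<subseteq> V \<and> card T = k}. codegree E T) = (r choose k) * card E"
proof -
  have "(\<Sum>T\<in>{T. T \<subseteq> V \<and> card T = k}. codegree E T)
      = (\<Sum>e\<in>E. card {T. T \<subseteq> e \<and> card T = k})"
    using sum_codegree_mult_eq[of V E "\<lambda>_. 1::nat" k] assms r_graph_finite_edges[OF assms]
    unfolding r_graph_def by simp
  also have "\<dots> = (\<Sum>e\<in>E. r choose k)"
    using assms(1) by (intro sum.cong) (auto simp: r_graph_def n_subsets)
  finally show ?thesis by simp
qed

lemma sum_codegree_squared_eq:
  assumes "r_graph r V E" "finite V"
  shows "(\<Sum>T\<in>{T. T \<subseteq> V \<and> card T = k}. (codegree E T)\<^sup>2)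
       = (\<Sum>e\<in>E. \<Sum>T\<in>{T. T \<subseteq> e \<and> card T = k}. codegree E T)"
  using sum_codegree_mult_eq[of V E "codegree E" k] assms r_graph_finite_edges[OF assms]
  unfolding r_graph_def by (simp add: power2_eq_square)

lemma contains_clique_if_full_link:
  assumes G: "r_graph r V E" and r: "r \<ge> 1" and e: "e \<in> E" and v: "v \<in> V - e"
    and full: "\<And>T. T \<subseteq> e \<Longrightarrow> card T = r - 1 \<Longrightarrow> insert v T \<in> E"
  shows "contains_clique r V E"
proof -
  have fe: "finite e" "card e = r" "e \<subseteq> V" using G e unfolding r_graph_def by auto
  let ?S = "insert v e"
  have S: "?S \<subseteq> V" "finite ?S" "card ?S = r + 1" using fe v by auto
  have "f \<in> E" if f: "f \<subseteq> ?S" "card f = r" for f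
  proof (cases "v \<in> f")
    case True
    have "finite f" using f S finite_subset by blast
    then have "insert v (f - {v}) \<in> E" using True f by (intro full) auto
    then show ?thesis using True by (simp add: insert_absorb)
  next
    case False
    then have "f = e" using f fe card_subset_eq[OF fe(1)] by auto
    then show ?thesis using e by simp
  qed
  then show ?thesis unfolding contains_clique_def using S by blast
qed

lemma card_link_le:
  assumes G: "r_graph r V E" and nc: "\<not> contains_clique r V E" and r: "r \<ge> 1"
    and e: "e \<in> E" and v: "v \<in> V - e"
  shows "card {T. T \<subseteq> e \<and> card T = r - 1 \<and> insert v T \<in> E} \<le> r - 1"
proof -
  let ?Te = "{T. T \<subseteq> e \<and> card T = r - 1}"
  have fe: "finite e" "card e = r" using G e unfolding r_graph_def by auto
  obtain T where "T \<in> ?Te" "insert v T \<notin> E"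
    using contains_clique_if_full_link[OF G r e v] nc by blast
  then have "{T \<in> ?Te. insert v T \<in> E} \<subset> ?Te" by blast
  then have "card {T \<in> ?Te. insert v T \<in> E} < card ?Te"
    using fe by (intro psubset_card_mono) auto
  also have "card ?Te = r"
    using card_subsets_card_minus_one[OF fe(1)] fe r by fastforce
  finally show ?thesis by (simp add: conj_assoc)
qed

lemma codegree_subset_edge:
  assumes G: "r_graph r V E" and r: "r \<ge> 1" and e: "e \<in> E" and fV: "finite V"
    and T: "T \<subseteq> e" "card T = r - 1"
  shows "codegree E T = 1 + card {v \<in> V - e. insert v T \<in> E}"
proof -
  have fe: "finite e" "card e = r" using G e unfolding r_graph_def by auto
  let ?B = "{v \<in> V - e. insert v T \<in> E}"
  have "f \<in> (\<lambda>v. insert v T) ` ?B" if f: "f \<in> E" "T \<subseteq> f" "f \<noteq> e" for f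
  proof -
    have ff: "finite f" "card f = r" "f \<subseteq> V" using G f unfolding r_graph_def by auto
    have "card (f - T) = 1"
      using card_Diff_subset[OF finite_subset[OF T(1) fe(1)] f(2)] ff T r by simp
    then obtain v where fv: "f - T = {v}" using card_1_singletonE by blast
    then have f_eq: "f = insert v T" using f(2) by auto
    have "v \<notin> e"
    proof
      assume "v \<in> e"
      then have "f \<subseteq> e" using f_eq T by auto
      then show False using f(3) card_subset_eq[OF fe(1)] ff fe by auto
    qed
    then show ?thesis using f_eq f ff by auto
  qed
  then have edges: "{f \<in> E. T \<subseteq> f} = insert e ((\<lambda>v. insert v T) ` ?B)"
    using e T by auto
  have "inj_on (\<lambda>v. insert v T) ?B"
    using T by (intro inj_onI) blast
  then show ?thesis
    unfolding codegree_def edges using fV T by (subst card_insert_disjoint) (auto simp: card_image)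
qed

lemma sum_codegree_edge_le:
  assumes G: "r_graph r V E" and nc: "\<not> contains_clique r V E" and r: "r \<ge> 1"
    and e: "e \<in> E" and fV: "finite V"
  shows "(\<Sum>T\<in>{T. T \<subseteq> e \<and> card T = r - 1}. codegree E T) \<le> r + (card V - r) * (r - 1)"
proof -
  let ?Te = "{T. T \<subseteq> e \<and> card T = r - 1}"
  have fe: "finite e" "card e = r" "e \<subseteq> V" using G e unfolding r_graph_def by auto
  have card_Te: "card ?Te = r"
    using card_subsets_card_minus_one[OF fe(1)] fe r by fastforce
  have "(\<Sum>T\<in>?Te. codegree E T) = (\<Sum>T\<in>?Te. 1 + card {v \<in> V - e. insert v T \<in> E})"
    using codegree_subset_edge[OF G r e fV] by (intro sum.cong) auto
  also have "\<dots> = r + (\<Sum>T\<in>?Te. card {v \<in> V - e. insert v T \<in> E})"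
    unfolding sum.distrib using card_Te by simp
  also have "(\<Sum>T\<in>?Te. card {v \<in> V - e. insert v T \<in> E})
      = (\<Sum>T\<in>?Te. \<Sum>v\<in>V - e. if insert v T \<in> E then 1 else 0)"
    using fV by (intro sum.cong refl) (simp add: sum.If_cases Int_def)
  also have "\<dots> = (\<Sum>v\<in>V - e. card {T. T \<subseteq> e \<and> card T = r - 1 \<and> insert v T \<in> E})"
    using fe(1) by (subst sum.swap) (auto simp: sum.If_cases Int_def conj_assoc intro!: sum.cong)
  also have "\<dots> \<le> (\<Sum>v\<in>V - e. r - 1)"
    by (intro sum_mono card_link_le[OF G nc r e])
  also have "\<dots> = (card V - r) * (r - 1)"
    using fe fV by (simp add: card_Diff_subset)
  finally show ?thesis by simp
qed

lemma clique_free_codegree_bound: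
  assumes G: "r_graph r V E" and nc: "\<not> contains_clique r V E" and r: "r \<ge> 1" and fV: "finite V"
  shows "r\<^sup>2 * card E \<le> (card V choose (r - 1)) * (r + (card V - r) * (r - 1))"
proof -
  let ?Ts = "{T. T \<subseteq> V \<and> card T = r - 1}"
  define B where "B = r + (card V - r) * (r - 1)"
  have sum_eq: "(\<Sum>T\<in>?Ts. codegree E T) = r * card E"
    using sum_codegree_eq[OF G fV, of "r - 1"] r by (cases r) auto
  have "(\<Sum>T\<in>?Ts. (codegree E T)\<^sup>2) \<le> (\<Sum>e\<in>E. B)"
    unfolding sum_codegree_squared_eq[OF G fV] B_def
    by (intro sum_mono sum_codegree_edge_le[OF G nc r _ fV])
  then have "(\<Sum>T\<in>?Ts. (codegree E T)\<^sup>2) \<le> card E * B"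
    by simp
  then have "real (\<Sum>T\<in>?Ts. (codegree E T)\<^sup>2) \<le> real (card E * B)"
    by (rule of_nat_mono)
  then have sq_le: "(\<Sum>T\<in>?Ts. (real (codegree E T))\<^sup>2) \<le> real (card E * B)"
    by simp
  have "real ((r * card E)\<^sup>2) = (\<Sum>T\<in>?Ts. real (codegree E T))\<^sup>2"
    by (simp flip: sum_eq)
  also have "\<dots> \<le> (\<Sum>T\<in>?Ts. (real (codegree E T))\<^sup>2) * card ?Ts"
    by (rule sum_squared_le_sum_of_squares)
  also have "\<dots> \<le> real (card E * B) * (card V choose (r - 1))"
    using sq_le fV by (intro mult_mono) (auto simp: n_subsets)
  finally have "real ((r * card E)\<^sup>2) \<le> real (card E * B * (card V choose (r - 1)))"
    by simp
  then have "card E * (r\<^sup>2 * card E) \<le> card E * ((card V choose (r - 1)) * B)"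
    unfolding of_nat_le_iff by (simp add: power2_eq_square ac_simps)
  then show ?thesis unfolding B_def by (cases "card E = 0") auto
qed

lemma clique_free_card_le:
  assumes G: "r_graph r V E" and nc: "\<not> contains_clique r V E" and r: "r \<ge> 1" and fV: "finite V"
  shows "r * (card V + 1 - r) * card E \<le> (r + (card V - r) * (r - 1)) * (card V choose r)"
proof -
  define n B where "n = card V" and "B = r + (card V - r) * (r - 1)"
  have absorb: "(n - (r - 1)) * (n choose (r - 1)) = r * (n choose r)"
    using binomial_absorb_comp[of n "r - 1"] binomial_absorption[of "r - 1" n] r by simp
  have "r * (r * (n + 1 - r) * card E) = r\<^sup>2 * card E * (n - (r - 1))"
    using r by (simp add: power2_eq_square Suc_diff_le ac_simps)
  also have "\<dots> \<le> (n choose (r - 1)) * B * (n - (r - 1))"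
    using clique_free_codegree_bound[OF G nc r fV] unfolding n_def B_def by (rule mult_right_mono) simp
  also have "\<dots> = r * (B * (n choose r))"
    using absorb by (simp add: ac_simps)
  finally show ?thesis
    using r unfolding n_def B_def by simp
qed

lemma ex_clique_attained:
  obtains E where "r_graph r {0..<n} E" "\<not> contains_clique r {0..<n} E" "ex_clique r n = card E"
proof -
  let ?V = "{0..<n}"
  let ?M = "{card E | E. r_graph r ?V E \<and> \<not> contains_clique r ?V E}"
  have "?M \<subseteq> card ` Pow (Pow ?V)"
    unfolding r_graph_def by auto
  then have "finite ?M"
    by (rule finite_subset) auto
  have "\<not> contains_clique r ?V {}"
  proof
    assume "contains_clique r ?V {}"
    then obtain S :: "nat set" where "card S = r + 1" "{e. e \<subseteq> S \<and> card e = r} \<subseteq> {}"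
      unfolding contains_clique_def by blast
    moreover obtain e where "e \<subseteq> S" "card e = r"
      using obtain_subset_with_card_n[of r S] \<open>card S = r + 1\<close> by auto
    ultimately show False by blast
  qed
  then have "?M \<noteq> {}"
    unfolding r_graph_def by blast
  then show ?thesis
    using that Max_in[OF \<open>finite ?M\<close>] unfolding ex_clique_def by auto
qed

theorem mainTheorem7:
  fixes r n :: nat
  assumes "r \<ge> 2" and "n \<ge> r + 1"
  shows "real (ex_clique r n)
           \<le> ((real r - 1) * (real n - real r + 1) + 1) / (real r * (real n - real r))
              * real (n choose r)"
proof -
  obtain E where G: "r_graph r {0..<n} E" and nc: "\<not> contains_clique r {0..<n} E"
    and ex: "ex_clique r n = card E"
    by (rule ex_clique_attained)
  have "r * (n + 1 - r) * card E \<le> (r + (n - r) * (r - 1)) * (n choose r)"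
    using clique_free_card_le[OF G nc] assms by simp
  then have "real (r * (n + 1 - r) * card E) \<le> real ((r + (n - r) * (r - 1)) * (n choose r))"
    by (rule of_nat_mono)
  moreover have "real (n + 1 - r) = real n - real r + 1" "real (n - r) = real n - real r"
    "real (r - 1) = real r - 1"
    using assms by (simp_all add: of_nat_diff)
  moreover have "real r + (real n - real r) * (real r - 1) = (real r - 1) * (real n - real r + 1) + 1"
    by (simp add: algebra_simps)
  ultimately have bound: "real r * (real n - real r + 1) * real (card E)
      \<le> ((real r - 1) * (real n - real r + 1) + 1) * real (n choose r)"
    by (simp only: of_nat_mult of_nat_add)
  have "real r * (real n - real r) * real (card E) \<le> real r * (real n - real r + 1) * real (card E)"
    by (simp add: algebra_simps)
  also note bound
  finally show ?thesis
    using assms ex by (simp add: pos_le_divide_eq mult.commute)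
qed

end
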